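(* Fix $0<B<1$ and $H>0$, and let $\beta(s)=(x(s),0,z(s))$ be the curve with $$x(s)=\frac1H\sqrt{1+B^2+2B\sin\!\big(Hs+\tfrac{3\pi}{2}\big)},\qquad z(s)=\int_{3\pi/(2H)}^{\,s+3\pi/(2H)}\frac{1+B\sin(Ht)}{\sqrt{1+B^2+2B\sin(Ht)}}\,dt .$$ Then $\beta$ is parametrized by arc length and $z'(s)>0$ for all $s$. Let $s_0>0$ be the smallest positive value with $x''(s_0)=0$ (so $\cos(Hs_0)=B$, i.e. $s_0=\frac1H\arccos B$), and let $g:[-s_0,s_0]\to\mathbb R$, $g(s)=x(s)-\frac{x'(s)}{z'(s)}z(s)$. Then: (i) $g(0)=\frac{1-B}{H}>0$; (ii) $g'(0)=g'(s_0)=0$; (iii) $g$ is increasing on $(-s_0,0)$ and decreasing on $(0,s_0)$.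
   Context: Rotating $\beta$ about the $z$-axis gives a Delaunay unduloid (embedded complete surface of revolution with constant mean curvature $H$, where mean curvature is the unnormalized sum of principal curvatures) whose neck lies in the plane $z=0$ at $s=0$. *)

theory Defs
  imports "HOL-Analysis.Analysis"
begin

definition xfun :: "real \<Rightarrow> real \<Rightarrow> real \<Rightarrow> real" where
  "xfun B H s = (1 / H) * sqrt (1 + B^2 + 2 * B * sin (H * s + 3 * pi / 2))"

text \<open>Oriented integral from 3pi/(2H) to s + 3pi/(2H) (Lebesgue interval integral, sign-correct
  when the upper limit is below the lower one).\<close>
definition zfun :: "real \<Rightarrow> real \<Rightarrow> real \<Rightarrow> real" where
  "zfun B H s = (LBINT t = 3 * pi / (2 * H) .. s + 3 * pi / (2 * H).
       (1 + B * sin (H * t)) / sqrt (1 + B^2 + 2 * B * sin (H * t)))"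

definition gfun :: "real \<Rightarrow> real \<Rightarrow> real \<Rightarrow> real" where
  "gfun B H s = xfun B H s - deriv (xfun B H) s / deriv (zfun B H) s * zfun B H s"

end

theory Submission
  imports Defs
begin

text \<open>Since \<open>sin (H s + 3\<pi>/2) = - cos (H s)\<close>, the profile is \<open>x = \<surd>D / H\<close> and
  \<open>z' = E / \<surd>D\<close> with \<open>E = 1 - B cos (H s) > 0\<close> and \<open>D = (B sin (H s))\<^sup>2 + E\<^sup>2\<close>; the
  latter identity is the arc length condition.  The slope \<open>x'/z' = B sin (H s) / E\<close> has
  derivative \<open>B H (cos (H s) - B) / E\<^sup>2\<close>, and in \<open>g' = x' - (x'/z')' z - (x'/z') z'\<close> the first
  and last terms cancel, so \<open>g' = - (x'/z')' z\<close>.  For \<open>0 < |s| < s\<^sub>0\<close> we have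
  \<open>cos (H s) > B\<close>, and \<open>z\<close> has the sign of \<open>s\<close> because it is increasing with \<open>z 0 = 0\<close>.\<close>

lemma sin_plus_3pi_half: "sin (x + 3 * pi / 2) = - cos (x :: real)"
proof -
  have "sin (x + 3 * pi / 2) = sin ((x + pi / 2) + pi)" by (simp add: algebra_simps)
  also have "\<dots> = - cos x" by (simp only: sin_periodic_pi) (simp add: sin_add)
  finally show ?thesis .
qed

lemma LBINT_has_real_derivative_upper:
  fixes f :: "real \<Rightarrow> real" and c :: real
  assumes "continuous_on UNIV f"
  shows "((\<lambda>u. LBINT y=c..u. f y) has_real_derivative f x) (at x)"
proof -
  let ?a = "min c x - 1" and ?b = "max c x + 1"
  have "((\<lambda>u. LBINT y=c..u. f y) has_vector_derivative f x) (at x within {?a..?b})"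
    by (rule interval_integral_FTC2) (auto intro: continuous_on_subset[OF assms])
  then have "((\<lambda>u. LBINT y=c..u. f y) has_vector_derivative f x) (at x within {?a<..<?b})"
    by (rule has_vector_derivative_within_subset) auto
  then have "((\<lambda>u. LBINT y=c..u. f y) has_vector_derivative f x) (at x)"
    by (subst (asm) has_vector_derivative_within_open) auto
  then show ?thesis by (simp add: has_real_derivative_iff_has_vector_derivative)
qed

locale unduloid =
  fixes B H :: real
  assumes B_pos: "0 < B" and B_less_1: "B < 1" and H_pos: "0 < H"
begin

definition radicand :: "real \<Rightarrow> real" where
  "radicand s = 1 + B\<^sup>2 - 2 * B * cos (H * s)"

definition slope :: "real \<Rightarrow> real" where
  "slope s = B * sin (H * s) / (1 - B * cos (H * s))"

definition slope_deriv :: "real \<Rightarrow> real" where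
  "slope_deriv s = B * H * (cos (H * s) - B) / (1 - B * cos (H * s))\<^sup>2"

lemma one_minus_B_cos_pos: "0 < 1 - B * cos (H * s)"
proof -
  have "B * cos (H * s) \<le> B" using B_pos by (simp add: mult_left_le)
  then show ?thesis using B_less_1 by linarith
qed

lemma radicand_eq_sum_squares: "radicand s = (B * sin (H * s))\<^sup>2 + (1 - B * cos (H * s))\<^sup>2"
  unfolding radicand_def using sin_cos_squared_add[of "H * s"] by algebra

lemma radicand_pos: "0 < radicand s"
  using one_minus_B_cos_pos[of s] by (simp add: radicand_eq_sum_squares add_nonneg_pos)

lemma xfun_eq: "xfun B H s = sqrt (radicand s) / H"
  by (simp add: xfun_def radicand_def sin_plus_3pi_half)

lemma radicand_has_derivative: "(radicand has_real_derivative 2 * B * H * sin (H * s)) (at s)"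
  unfolding radicand_def[abs_def] by (auto intro!: derivative_eq_intros)

lemma sqrt_radicand_has_derivative:
  "((\<lambda>s. sqrt (radicand s)) has_real_derivative B * H * sin (H * s) / sqrt (radicand s)) (at s)"
  using DERIV_chain2[OF DERIV_real_sqrt[OF radicand_pos] radicand_has_derivative, of s]
  by (simp add: field_simps)

lemma xfun_has_derivative:
  "(xfun B H has_real_derivative B * sin (H * s) / sqrt (radicand s)) (at s)"
  using DERIV_cdivide[OF sqrt_radicand_has_derivative, of H] H_pos
  by (simp add: xfun_eq[abs_def])

lemma zfun_has_derivative:
  "(zfun B H has_real_derivative (1 - B * cos (H * s)) / sqrt (radicand s)) (at s)"
proof -
  define c where "c = 3 * pi / (2 * H)"
  define f where "f t = (1 + B * sin (H * t)) / sqrt (1 + B\<^sup>2 + 2 * B * sin (H * t))" for t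
  have "0 < 1 + B\<^sup>2 + 2 * B * sin (H * t)" for t
  proof -
    have "B * (- 1) \<le> B * sin (H * t)" using B_pos by (intro mult_left_mono) auto
    moreover have "0 < (1 - B)\<^sup>2" using B_less_1 by simp
    ultimately show ?thesis by (simp add: power2_eq_square algebra_simps)
  qed
  then have "continuous_on UNIV f"
    unfolding f_def by (intro continuous_intros) (auto simp: less_imp_neq[symmetric])
  from DERIV_chain2[OF LBINT_has_real_derivative_upper[OF this] DERIV_add[OF DERIV_ident DERIV_const]]
  have "((\<lambda>s. LBINT t=c..s + c. f t) has_real_derivative f (s + c)) (at s)"
    by simp
  moreover have "H * (s + c) = H * s + 3 * pi / 2"
    using H_pos by (simp add: c_def field_simps)
  ultimately show ?thesis
    by (simp add: zfun_def[abs_def] f_def c_def radicand_def sin_plus_3pi_half)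
qed
lemma deriv_xfun: "deriv (xfun B H) s = B * sin (H * s) / sqrt (radicand s)"
  by (rule DERIV_imp_deriv[OF xfun_has_derivative])

lemma deriv_zfun: "deriv (zfun B H) s = (1 - B * cos (H * s)) / sqrt (radicand s)"
  by (rule DERIV_imp_deriv[OF zfun_has_derivative])

lemma deriv_zfun_pos: "0 < deriv (zfun B H) s"
  using one_minus_B_cos_pos radicand_pos by (simp add: deriv_zfun)

lemma arc_length: "(deriv (xfun B H) s)\<^sup>2 + (deriv (zfun B H) s)\<^sup>2 = 1"
  using radicand_pos[of s]
  by (simp add: deriv_xfun deriv_zfun power_divide add_divide_distrib[symmetric]
      radicand_eq_sum_squares[symmetric])

lemma zfun_0: "zfun B H 0 = 0"
  by (simp add: zfun_def)

lemma zfun_pos: "0 < s \<Longrightarrow> 0 < zfun B H s"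
  and zfun_neg: "s < 0 \<Longrightarrow> zfun B H s < 0"
  using DERIV_pos_imp_increasing[of 0 s "zfun B H"] DERIV_pos_imp_increasing[of s 0 "zfun B H"]
    zfun_has_derivative deriv_zfun_pos
  by (auto simp: zfun_0 deriv_zfun)

lemma deriv_xfun_has_derivative:
  "(deriv (xfun B H) has_real_derivative
      B * H * (cos (H * s) - B) * (1 - B * cos (H * s)) / (radicand s * sqrt (radicand s))) (at s)"
proof -
  let ?q = "sqrt (radicand s)"
  have q: "0 < ?q" "?q * ?q = radicand s" using radicand_pos[of s] by auto
  have "((\<lambda>s. B * sin (H * s) / sqrt (radicand s)) has_real_derivative
      (B * (cos (H * s) * H) * ?q - B * sin (H * s) * (B * H * sin (H * s) / ?q)) / (?q * ?q)) (at s)"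
    using q(1) by (intro DERIV_divide sqrt_radicand_has_derivative derivative_eq_intros) auto
  moreover have "(B * (cos (H * s) * H) * ?q - B * sin (H * s) * (B * H * sin (H * s) / ?q)) / (?q * ?q)
      = B * H * (cos (H * s) * radicand s - B * (sin (H * s))\<^sup>2) / (radicand s * ?q)"
    using q by (simp add: field_simps power2_eq_square)
  moreover have "cos (H * s) * radicand s - B * (sin (H * s))\<^sup>2
      = (cos (H * s) - B) * (1 - B * cos (H * s))"
    unfolding radicand_def using sin_cos_squared_add[of "H * s"] by algebra
  ultimately show ?thesis by (simp add: deriv_xfun[abs_def] mult.assoc)
qed

lemma slope_has_derivative: "(slope has_real_derivative slope_deriv s) (at s)"
proof -
  let ?E = "1 - B * cos (H * s)"
  have E: "?E \<noteq> 0" using one_minus_B_cos_pos[of s] by simp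
  have "(slope has_real_derivative
      (B * (cos (H * s) * H) * ?E - B * sin (H * s) * (B * (sin (H * s) * H))) / (?E * ?E)) (at s)"
    unfolding slope_def[abs_def] using E by (auto intro!: derivative_eq_intros)
  moreover have "B * (cos (H * s) * H) * ?E - B * sin (H * s) * (B * (sin (H * s) * H))
      = B * H * (cos (H * s) - B)"
    using sin_cos_squared_add[of "H * s"] by algebra
  ultimately show ?thesis by (simp add: slope_deriv_def power2_eq_square)
qed

lemma deriv2_xfun_eq_0_iff: "deriv (deriv (xfun B H)) s = 0 \<longleftrightarrow> cos (H * s) = B"
  using DERIV_imp_deriv[OF deriv_xfun_has_derivative] B_pos H_pos one_minus_B_cos_pos[of s]
    radicand_pos[of s]
  by simp

lemma cos_gt_B: "\<bar>s\<bar> < arccos B / H \<Longrightarrow> B < cos (H * s)"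
proof -
  assume "\<bar>s\<bar> < arccos B / H"
  then have "H * \<bar>s\<bar> < arccos B" using H_pos by (simp add: field_simps)
  moreover have "arccos B \<le> pi" using B_pos B_less_1 by (simp add: arccos_ubound)
  ultimately have "cos (arccos B) < cos (H * \<bar>s\<bar>)"
    using H_pos by (intro cos_monotone_0_pi) auto
  moreover have "cos (H * \<bar>s\<bar>) = cos (H * s)"
    using H_pos by (cases "0 \<le> s") (simp_all add: abs_mult)
  ultimately show ?thesis using B_pos B_less_1 by simp
qed

lemma slope_deriv_pos: "\<bar>s\<bar> < arccos B / H \<Longrightarrow> 0 < slope_deriv s"
  using cos_gt_B[of s] B_pos H_pos one_minus_B_cos_pos[of s] by (simp add: slope_deriv_def)

lemma gfun_eq: "gfun B H s = xfun B H s - slope s * zfun B H s"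
  using one_minus_B_cos_pos[of s] radicand_pos[of s]
  by (simp add: gfun_def deriv_xfun deriv_zfun slope_def)

lemma gfun_has_derivative: "(gfun B H has_real_derivative - slope_deriv s * zfun B H s) (at s)"
proof -
  have "(gfun B H has_real_derivative deriv (xfun B H) s
      - (slope_deriv s * zfun B H s + deriv (zfun B H) s * slope s)) (at s)"
    unfolding gfun_eq[abs_def] deriv_xfun deriv_zfun
    by (intro DERIV_diff DERIV_mult xfun_has_derivative slope_has_derivative zfun_has_derivative)
  moreover have "deriv (zfun B H) s * slope s = deriv (xfun B H) s"
    using one_minus_B_cos_pos[of s] by (simp add: deriv_xfun deriv_zfun slope_def)
  ultimately show ?thesis by simp
qed

lemma gfun_strict_mono_on: "strict_mono_on {- arccos B / H<..<0} (gfun B H)"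
proof (rule strict_mono_onI)
  fix r t assume "r \<in> {- arccos B / H<..<0}" "t \<in> {- arccos B / H<..<0}" "r < t"
  then have "0 < - slope_deriv x * zfun B H x" if "r \<le> x" "x \<le> t" for x
    using that slope_deriv_pos[of x] zfun_neg[of x] by (simp add: mult_pos_neg)
  with \<open>r < t\<close> show "gfun B H r < gfun B H t"
    using DERIV_pos_imp_increasing gfun_has_derivative by blast
qed

lemma gfun_strict_antimono_on: "strict_antimono_on {0<..<arccos B / H} (gfun B H)"
proof (rule monotone_onI)
  fix r t assume "r \<in> {0<..<arccos B / H}" "t \<in> {0<..<arccos B / H}" "r < t"
  then have "- slope_deriv x * zfun B H x < 0" if "r \<le> x" "x \<le> t" for x
    using that slope_deriv_pos[of x] zfun_pos[of x] by simp
  with \<open>r < t\<close> show "gfun B H t < gfun B H r"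
    using DERIV_neg_imp_decreasing gfun_has_derivative by blast
qed

end

theorem lemma3p3:
  fixes B H :: real
  assumes "0 < B" "B < 1" "0 < H"
  defines "s0 \<equiv> arccos B / H"
  shows "(\<forall>s. xfun B H differentiable at s \<and> zfun B H differentiable at s \<and>
              (deriv (xfun B H) s)\<^sup>2 + (deriv (zfun B H) s)\<^sup>2 = 1) \<and>
         (\<forall>s. deriv (zfun B H) s > 0) \<and>
         (0 < s0 \<and> (\<forall>s. deriv (xfun B H) differentiable at s) \<and>
          deriv (deriv (xfun B H)) s0 = 0 \<and>
          (\<forall>s. 0 < s \<and> s < s0 \<longrightarrow> deriv (deriv (xfun B H)) s \<noteq> 0) \<and>
          cos (H * s0) = B) \<and>
         (gfun B H 0 = (1 - B) / H \<and> (1 - B) / H > 0) \<and>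
         ((gfun B H has_real_derivative 0) (at 0) \<and>
          (gfun B H has_real_derivative 0) (at s0)) \<and>
         (strict_mono_on {-s0<..<0} (gfun B H) \<and>
          strict_antimono_on {0<..<s0} (gfun B H))"
proof -
  interpret unduloid B H using assms(1-3) by unfold_locales
  have "0 < arccos B" using arccos_lt_bounded[of B] assms(1,2) by simp
  then have s0_pos: "0 < s0" using assms(3) by (simp add: s0_def)
  have cos_s0: "cos (H * s0) = B" using assms by (simp add: s0_def)
  have differentiable:
    "xfun B H differentiable at s" "zfun B H differentiable at s"
    "deriv (xfun B H) differentiable at s" for s
    using xfun_has_derivative zfun_has_derivative deriv_xfun_has_derivative
    by (auto simp: real_differentiable_def)
  have "deriv (deriv (xfun B H)) s \<noteq> 0" if "0 < s" "s < s0" for s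
    using cos_gt_B[of s] that by (simp add: deriv2_xfun_eq_0_iff s0_def)
  moreover have "gfun B H 0 = (1 - B) / H"
  proof -
    have "radicand 0 = (1 - B)\<^sup>2" by (simp add: radicand_def power2_eq_square algebra_simps)
    then show ?thesis using assms(2) by (simp add: gfun_eq xfun_eq zfun_0)
  qed
  moreover have "(gfun B H has_real_derivative 0) (at 0)"
    using gfun_has_derivative[of 0] by (simp add: zfun_0)
  moreover have "(gfun B H has_real_derivative 0) (at s0)"
    using gfun_has_derivative[of s0] by (simp add: slope_deriv_def cos_s0)
  ultimately show ?thesis
    using differentiable arc_length deriv_zfun_pos s0_pos cos_s0 assms(2,3)
      gfun_strict_mono_on gfun_strict_antimono_on
    by (simp add: deriv2_xfun_eq_0_iff s0_def)
qed

end
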